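(* Let $\mathfrak{g}$ be a real solvable Lie algebra of dimension $2n$ with basis $\{X_1,\dots,X_{4m},\dots,X_{2n}\}$ such that $b_1(\mathfrak{g})=4m$, and let $E$ be a paracomplex structure on $\mathfrak{g}$ with eigenspace decomposition $\mathfrak{g}=\mathfrak{g}_+\oplus\mathfrak{g}_-$. Suppose 1. $X_i\notin D^1\mathfrak{g}=[\mathfrak{g},\mathfrak{g}]$ for $1\le i\le 4m$; 2. $X_i\in\mathfrak{g}_+$ for $1\le i\le 2m$ and $X_i\in\mathfrak{g}_-$ for $2m+1\le i\le 4m$; 3. $b_1(\mathfrak{g}_+)=b_1(\mathfrak{g}_-)=2m$. Then $\mathfrak{g}_+\underline{\times}\mathfrak{g}_-$ admits a paracomplex structure.
   Context: All Lie algebras are finite-dimensional over $\mathbb{R}$; $b_1(\mathfrak{h})=\dim\mathfrak{h}/[\mathfrak{h},\mathfrak{h}]$. A product structure on a Lie algebra $\mathfrak{g}$ is a linear map $E:\mathfrak{g}\to\mathfrak{g}$ with $E^2=\mathrm{id}$, $E\ne\pm\mathrm{id}$, satisfying $E[X,Y]=[E(X),Y]+[X,E(Y)]-E[E(X),E(Y)]$ for all $X,Y$; then the eigenspaces $\mathfrak{g}_+$ (eigenvalue $1$) and $\mathfrak{g}_-$ (eigenvalue $-1$) are subalgebras and $\mathfrak{g}=\mathfrak{g}_+\oplus\mathfrak{g}_-$. A paracomplex structure is a product structure with $\dim\mathfrak{g}_+=\dim\mathfrak{g}_-$. Product by generators: for Lie algebras $\mathfrak{h}_1,\mathfrak{h}_2$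 with $m_i=b_1(\mathfrak{h}_i)$, choose linear forms $\omega_1,\dots,\omega_{m_1}$ on $\mathfrak{h}_1$ vanishing on $[\mathfrak{h}_1,\mathfrak{h}_1]$ and inducing a basis of $(\mathfrak{h}_1/[\mathfrak{h}_1,\mathfrak{h}_1])^*$, similarly $\omega'_1,\dots,\omega'_{m_2}$ for $\mathfrak{h}_2$; $\mathfrak{h}_1\underline{\times}\mathfrak{h}_2$ is the Lie algebra on $\mathfrak{h}_1\oplus\mathfrak{h}_2\oplus\mathbb{R}^{m_1m_2}$ (basis $Z_{ij}$ of the last summand) whose bracket restricts to the given brackets on $\mathfrak{h}_1$ and $\mathfrak{h}_2$, with $Z_{ij}$ central and $[x,y]=\sum_{i,j}\omega_i(x)\omega'_j(y)Z_{ij}$ for $x\in\mathfrak{h}_1$, $y\in\mathfrak{h}_2$. *)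

theory Defs
  imports "HOL-Analysis.Analysis" "HOL-Library.Function_Algebras"
begin

instantiation "fun" :: (type, real_vector) real_vector
begin
definition scaleR_fun :: "real \<Rightarrow> ('a \<Rightarrow> 'b) \<Rightarrow> 'a \<Rightarrow> 'b"
  where "scaleR_fun c f = (\<lambda>x. c *\<^sub>R f x)"
instance by standard (auto simp: scaleR_fun_def fun_eq_iff scaleR_add_right scaleR_add_left)
end

text \<open>A finite-dimensional real Lie algebra: a finite-dimensional subspace V of a
  real vector space together with a bracket which is bilinear, skew-symmetric
  and satisfies the Jacobi identity on V (its values outside V are irrelevant).\<close>
definition lie_algebra :: "'a::real_vector set \<Rightarrow> ('a \<Rightarrow> 'a \<Rightarrow> 'a) \<Rightarrow> bool" where
  "lie_algebra V br \<longleftrightarrow>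
     subspace V \<and> (\<exists>B. finite B \<and> B \<subseteq> V \<and> span B = V) \<and>
     (\<forall>x\<in>V. \<forall>y\<in>V. br x y \<in> V) \<and>
     (\<forall>x\<in>V. \<forall>y\<in>V. \<forall>z\<in>V. \<forall>a b::real.
         br (a *\<^sub>R x + b *\<^sub>R y) z = a *\<^sub>R br x z + b *\<^sub>R br y z) \<and>
     (\<forall>x\<in>V. \<forall>y\<in>V. br x y = - br y x) \<and>
     (\<forall>x\<in>V. \<forall>y\<in>V. \<forall>z\<in>V. br x (br y z) + br y (br z x) + br z (br x y) = 0)"

definition brackets :: "('a::real_vector \<Rightarrow> 'a \<Rightarrow> 'a) \<Rightarrow> 'a set \<Rightarrow> 'a set \<Rightarrow> 'a set" where
  "brackets br A B = span {br x y | x y. x \<in> A \<and> y \<in> B}"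

fun derived_series :: "('a::real_vector \<Rightarrow> 'a \<Rightarrow> 'a) \<Rightarrow> 'a set \<Rightarrow> nat \<Rightarrow> 'a set" where
  "derived_series br V 0 = V"
| "derived_series br V (Suc k) = brackets br (derived_series br V k) (derived_series br V k)"

definition solvable_lie :: "'a::real_vector set \<Rightarrow> ('a \<Rightarrow> 'a \<Rightarrow> 'a) \<Rightarrow> bool" where
  "solvable_lie V br \<longleftrightarrow> lie_algebra V br \<and> (\<exists>k. derived_series br V k = {0})"

definition b1 :: "'a::real_vector set \<Rightarrow> ('a \<Rightarrow> 'a \<Rightarrow> 'a) \<Rightarrow> nat" where
  "b1 V br = dim V - dim (brackets br V V)"

definition plus_eigenspace :: "'a::real_vector set \<Rightarrow> ('a \<Rightarrow> 'a) \<Rightarrow> 'a set" where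
  "plus_eigenspace V E = {x \<in> V. E x = x}"

definition minus_eigenspace :: "'a::real_vector set \<Rightarrow> ('a \<Rightarrow> 'a) \<Rightarrow> 'a set" where
  "minus_eigenspace V E = {x \<in> V. E x = - x}"

definition product_structure :: "'a::real_vector set \<Rightarrow> ('a \<Rightarrow> 'a \<Rightarrow> 'a) \<Rightarrow> ('a \<Rightarrow> 'a) \<Rightarrow> bool" where
  "product_structure V br E \<longleftrightarrow>
     (\<forall>x\<in>V. E x \<in> V) \<and>
     (\<forall>x\<in>V. \<forall>y\<in>V. \<forall>a b::real. E (a *\<^sub>R x + b *\<^sub>R y) = a *\<^sub>R E x + b *\<^sub>R E y) \<and>
     (\<forall>x\<in>V. E (E x) = x) \<and>
     \<not> (\<forall>x\<in>V. E x = x) \<and> \<not> (\<forall>x\<in>V. E x = - x) \<and>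
     (\<forall>x\<in>V. \<forall>y\<in>V. E (br x y) = br (E x) y + br x (E y) - E (br (E x) (E y)))"

definition paracomplex_structure :: "'a::real_vector set \<Rightarrow> ('a \<Rightarrow> 'a \<Rightarrow> 'a) \<Rightarrow> ('a \<Rightarrow> 'a) \<Rightarrow> bool" where
  "paracomplex_structure V br E \<longleftrightarrow>
     product_structure V br E \<and> dim (plus_eigenspace V E) = dim (minus_eigenspace V E)"

text \<open>Admissible generator forms for the product by generators:
  \<omega>_0,...,\<omega>_(b1-1) are linear forms on h vanishing on [h,h] and inducing a basis of
  (h/[h,h])^*, i.e. (the quotient having dimension b1) they are linearly independent.\<close>
definition generator_forms :: "'a::real_vector set \<Rightarrow> ('a \<Rightarrow> 'a \<Rightarrow> 'a) \<Rightarrow> (nat \<Rightarrow> 'a \<Rightarrow> real) \<Rightarrow> bool" where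
  "generator_forms V br \<omega> \<longleftrightarrow>
     (\<forall>i < b1 V br.
        (\<forall>x\<in>V. \<forall>y\<in>V. \<forall>a b::real. \<omega> i (a *\<^sub>R x + b *\<^sub>R y) = a * \<omega> i x + b * \<omega> i y) \<and>
        (\<forall>x\<in>brackets br V V. \<omega> i x = 0)) \<and>
     (\<forall>c::nat \<Rightarrow> real. (\<forall>x\<in>V. (\<Sum>i<b1 V br. c i * \<omega> i x) = 0) \<longrightarrow> (\<forall>i < b1 V br. c i = 0))"

text \<open>Product by generators h1 \<times>_ h2 realised on h1 \<oplus> h2 \<oplus> R^(m1 m2), the last
  summand given by functions z :: nat \<times> nat \<Rightarrow> real supported on {..<m1} \<times> {..<m2}
  (coordinates w.r.t. the basis Z_ij).\<close>
definition gen_prod_carrier :: "'a::real_vector set \<Rightarrow> ('a \<Rightarrow> 'a \<Rightarrow> 'a) \<Rightarrow> 'b::real_vector set \<Rightarrow> ('b \<Rightarrow> 'b \<Rightarrow> 'b)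
     \<Rightarrow> ('a \<times> 'b \<times> (nat \<times> nat \<Rightarrow> real)) set" where
  "gen_prod_carrier V1 br1 V2 br2 =
     {(x, y, z). x \<in> V1 \<and> y \<in> V2 \<and> (\<forall>i j. (b1 V1 br1 \<le> i \<or> b1 V2 br2 \<le> j) \<longrightarrow> z (i, j) = 0)}"

definition gen_prod_bracket :: "'a::real_vector set \<Rightarrow> ('a \<Rightarrow> 'a \<Rightarrow> 'a) \<Rightarrow> (nat \<Rightarrow> 'a \<Rightarrow> real)
     \<Rightarrow> 'b::real_vector set \<Rightarrow> ('b \<Rightarrow> 'b \<Rightarrow> 'b) \<Rightarrow> (nat \<Rightarrow> 'b \<Rightarrow> real)
     \<Rightarrow> ('a \<times> 'b \<times> (nat \<times> nat \<Rightarrow> real)) \<Rightarrow> ('a \<times> 'b \<times> (nat \<times> nat \<Rightarrow> real)) \<Rightarrow> ('a \<times> 'b \<times> (nat \<times> nat \<Rightarrow> real))" where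
  "gen_prod_bracket V1 br1 \<omega>1 V2 br2 \<omega>2 = (\<lambda>(x, y, z) (x', y', z').
     (br1 x x', br2 y y',
      (\<lambda>(i, j). if i < b1 V1 br1 \<and> j < b1 V2 br2
                then \<omega>1 i x * \<omega>2 j y' - \<omega>1 i x' * \<omega>2 j y else 0)))"

end

theory Submission
  imports Defs
begin

(* Let E be the identity on h1 and on the central generators Z_ij with i < b1(h1)/2, and minus
   the identity on h2 and on the remaining Z_ij.  The only bracket between h1 and h2 is the central
   term sum omega_i(x) omega'_j(y) Z_ij, which is odd in the h2-argument; this makes the
   integrability condition hold whatever linear map E induces on the centre.  The eigenspaces
   are h1 plus one half of the centre and h2 plus the other half, so they have the same dimension
   as soon as dim h1 = dim h2 and b1(h1) is even.  For the corollary take h1 = g+ and h2 = g-: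
   these are Lie subalgebras of equal dimension because E is paracomplex, and b1(g+) = 2m. *)

section \<open>Finitely spanned subspaces\<close>

definition finitely_spanned :: "'a::real_vector set \<Rightarrow> bool" where
  "finitely_spanned A \<longleftrightarrow> (\<exists>S. finite S \<and> span S = A)"

lemma finitely_spanned_obtains_basis:
  assumes "finitely_spanned A"
  obtains B where "finite B" "independent B" "span B = A"
proof -
  obtain S where S: "finite S" "span S = A"
    using assms unfolding finitely_spanned_def by blast
  obtain B where B: "B \<subseteq> A" "independent B" "A \<subseteq> span B"
    using maximal_independent_subset[of A] by blast
  have "finite B"
    using independent_span_bound[OF S(1) B(2)] B(1) S(2) by blast
  moreover have "span B = A"
    using B S(2) span_minimal[OF B(1)] by (metis subspace_span subset_antisym)
  ultimately show thesis using B(2) that by blast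
qed

lemma finitely_spanned_subspace:
  assumes "finitely_spanned A" "subspace S" "S \<subseteq> A"
  shows "finitely_spanned S"
proof -
  obtain T where T: "finite T" "span T = A"
    using assms(1) unfolding finitely_spanned_def by blast
  obtain B where B: "B \<subseteq> S" "independent B" "S \<subseteq> span B"
    using maximal_independent_subset[of S] by blast
  have "finite B"
    using independent_span_bound[OF T(1) B(2)] B(1) assms(3) T(2) by blast
  moreover have "span B = S"
    using B span_minimal[OF B(1) assms(2)] by blast
  ultimately show ?thesis
    unfolding finitely_spanned_def by blast
qed

lemma finitely_spanned_zero: "finitely_spanned {0}"
  unfolding finitely_spanned_def by (rule exI[of _ "{}"]) simp

lemma dim_zero_singleton [simp]: "dim {0} = 0"
  using dim_span_eq_card_independent[OF independent_empty] by simp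

lemma dim_eq_0_iff_finitely_spanned:
  assumes "finitely_spanned A"
  shows "dim A = 0 \<longleftrightarrow> A = {0}"
proof
  obtain B where B: "finite B" "independent B" "span B = A"
    using assms finitely_spanned_obtains_basis by blast
  assume "dim A = 0"
  then have "B = {}"
    using B dim_span_eq_card_independent[OF B(2)] by simp
  then show "A = {0}"
    using B(3) by simp
qed simp

lemma span_Times_zero_Un:
  "span (A \<times> {0} \<union> {0} \<times> B) = span A \<times> span B"
  unfolding span_Un span_Times_sing1 span_Times_sing2
proof (intro equalityI subsetI)
  fix p assume "p \<in> span A \<times> span B"
  then show "p \<in> {x + y |x y. x \<in> span A \<times> {0} \<and> y \<in> {0} \<times> span B}"
    by (intro CollectI exI[of _ "(fst p, 0)"] exI[of _ "(0, snd p)"]) auto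
qed auto

lemma independent_Times_zero_Un:
  assumes A: "independent A" and B: "independent B"
  shows "independent (A \<times> {0} \<union> {0} \<times> B)"
proof -
  have "0 \<notin> A" "0 \<notin> B"
    using A B dependent_zero by auto
  show ?thesis
    unfolding dependent_def
  proof safe
    fix a
    assume a: "a \<in> A"
    assume "(a, 0) \<in> span (A \<times> {0} \<union> {0} \<times> B - {(a, 0)})"
    also have "A \<times> {0} \<union> {0} \<times> B - {(a, 0)} = (A - {a}) \<times> {0} \<union> {0} \<times> B"
      using \<open>0 \<notin> B\<close> by auto
    finally show False
      using a A dependent_def by (auto simp: span_Times_zero_Un)
  next
    fix b
    assume b: "b \<in> B"
    assume "(0, b) \<in> span (A \<times> {0} \<union> {0} \<times> B - {(0, b)})"
    also have "A \<times> {0} \<union> {0} \<times> B - {(0, b)} = A \<times> {0} \<union> {0} \<times> (B - {b})"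
      using \<open>0 \<notin> A\<close> by auto
    finally show False
      using b B dependent_def by (auto simp: span_Times_zero_Un)
  qed
qed

lemma finitely_spanned_Times:
  "finitely_spanned A \<Longrightarrow> finitely_spanned B \<Longrightarrow> finitely_spanned (A \<times> B)"
  unfolding finitely_spanned_def by (metis span_Times_zero_Un finite_Un finite_SigmaI finite.intros)

lemma dim_Times_finitely_spanned:
  assumes "finitely_spanned A" "finitely_spanned B"
  shows "dim (A \<times> B) = dim A + dim B"
proof -
  obtain BA where BA: "finite BA" "independent BA" "span BA = A"
    using assms(1) finitely_spanned_obtains_basis by blast
  obtain BB where BB: "finite BB" "independent BB" "span BB = B"
    using assms(2) finitely_spanned_obtains_basis by blast
  have "0 \<notin> BA" "0 \<notin> BB" using BA BB dependent_zero by auto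
  have "dim (A \<times> B) = card (BA \<times> {0} \<union> {0} \<times> BB)"
    using dim_span_eq_card_independent[OF independent_Times_zero_Un[OF BA(2) BB(2)]]
    by (simp add: span_Times_zero_Un BA(3) BB(3))
  also have "\<dots> = card (BA \<times> {0::'b}) + card ({0::'a} \<times> BB)"
    using BA(1) BB(1) \<open>0 \<notin> BA\<close> by (intro card_Un_disjoint) auto
  also have "\<dots> = dim A + dim B"
    using BA BB by (simp add: card_cartesian_product dim_span_eq_card_independent[symmetric])
  finally show ?thesis .
qed

definition supported_on :: "'p set \<Rightarrow> ('p \<Rightarrow> real) set" where
  "supported_on P = {z. \<forall>q. q \<notin> P \<longrightarrow> z q = 0}"

lemma inj_indicator_singleton: "inj (\<lambda>p. indicator {p} :: 'p \<Rightarrow> real)"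
  by (rule injI) (metis indicator_simps(1) indicator_simps(2) singletonD singletonI zero_neq_one)

lemma
  assumes "finite P"
  shows independent_indicator_singletons: "independent ((\<lambda>p. indicator {p}) ` P :: ('p \<Rightarrow> real) set)"
    and span_indicator_singletons: "span ((\<lambda>p. indicator {p}) ` P) = supported_on P"
proof -
  have expand: "(\<Sum>p\<in>P. c p *\<^sub>R indicator {p}) q = (if q \<in> P then c q else 0)"
    for c :: "'p \<Rightarrow> real" and q
    using assms by (induction P rule: finite_induct) (auto simp: scaleR_fun_def indicator_def)
  show "independent ((\<lambda>p. indicator {p}) ` P :: ('p \<Rightarrow> real) set)"
  proof (rule independent_if_scalars_zero)
    fix f :: "('p \<Rightarrow> real) \<Rightarrow> real" and x :: "'p \<Rightarrow> real"
    assume s: "(\<Sum>x\<in>(\<lambda>p. indicator {p}) ` P. f x *\<^sub>R x) = 0"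
      and x: "x \<in> (\<lambda>p. indicator {p}) ` P"
    then obtain p where p: "p \<in> P" "x = indicator {p}" by auto
    have "(\<Sum>q\<in>P. f (indicator {q}) *\<^sub>R (indicator {q} :: 'p \<Rightarrow> real)) p = 0"
      using s by (simp add: sum.reindex inj_on_subset[OF inj_indicator_singleton])
    then show "f x = 0" using p expand by simp
  qed (use assms in simp)
  show "span ((\<lambda>p. indicator {p}) ` P) = supported_on P"
  proof
    show "span ((\<lambda>p. indicator {p}) ` P) \<subseteq> supported_on P"
      by (rule span_minimal) (auto simp: supported_on_def subspace_def scaleR_fun_def indicator_def)
    show "supported_on P \<subseteq> span ((\<lambda>p. indicator {p}) ` P)"
    proof
      fix z assume "z \<in> supported_on P"
      then have "z = (\<Sum>p\<in>P. z p *\<^sub>R indicator {p})"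
        by (auto simp: expand supported_on_def fun_eq_iff)
      also have "\<dots> \<in> span ((\<lambda>p. indicator {p}) ` P)"
        by (intro span_sum span_scale span_base) auto
      finally show "z \<in> span ((\<lambda>p. indicator {p}) ` P)" .
    qed
  qed
qed

lemma finitely_spanned_supported_on: "finite P \<Longrightarrow> finitely_spanned (supported_on P)"
  unfolding finitely_spanned_def using span_indicator_singletons by blast

lemma dim_supported_on:
  assumes "finite P" shows "dim (supported_on P) = card P"
proof -
  have "card ((\<lambda>p. indicator {p} :: _ \<Rightarrow> real) ` P) = card P"
    using inj_on_subset[OF inj_indicator_singleton subset_UNIV] by (rule card_image)
  moreover have "dim (supported_on P) = card ((\<lambda>p. indicator {p} :: _ \<Rightarrow> real) ` P)"
    unfolding span_indicator_singletons[OF assms, symmetric]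
    by (rule dim_span_eq_card_independent[OF independent_indicator_singletons[OF assms]])
  ultimately show ?thesis by simp
qed

section \<open>Eigenspaces of a product structure\<close>

lemma real_vector_add_self_eq_iff:
  fixes a b :: "'a::real_vector"
  shows "a + a = b + b \<longleftrightarrow> a = b"
  by (metis scaleR_half_double)

lemma real_vector_neg_eq_self_iff:
  fixes a :: "'a::real_vector"
  shows "- a = a \<longleftrightarrow> a = 0"
  by (metis real_vector_add_self_eq_iff add.right_neutral neg_eq_iff_add_eq_0)

lemma lie_algebra_finitely_spanned: "lie_algebra V br \<Longrightarrow> finitely_spanned V"
  unfolding lie_algebra_def finitely_spanned_def by blast

lemma lie_algebra_subspace: "lie_algebra V br \<Longrightarrow> subspace V"
  unfolding lie_algebra_def by blast

lemma lie_algebra_bracket_uminus: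
  assumes lie: "lie_algebra V br" and "x \<in> V" "y \<in> V"
  shows "br (- x) y = - br x y" "br x (- y) = - br x y"
proof -
  have bil: "br (a *\<^sub>R u + b *\<^sub>R v) w = a *\<^sub>R br u w + b *\<^sub>R br v w"
    if "u \<in> V" "v \<in> V" "w \<in> V" for a b u v w
    using lie that unfolding lie_algebra_def by blast
  have skew: "br u v = - br v u" if "u \<in> V" "v \<in> V" for u v
    using lie that unfolding lie_algebra_def by blast
  show "br (- x) y = - br x y"
    using bil[of x x y "-1" 0] assms by simp
  have "br (- y) x = - br y x"
    using bil[of y y x "-1" 0] assms by simp
  then show "br x (- y) = - br x y"
    using skew assms subspace_neg[OF lie_algebra_subspace[OF lie]] by metis
qed

lemma lie_algebra_subalgebra:
  assumes lie: "lie_algebra V br" and S: "subspace S" "S \<subseteq> V"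
    and closed: "\<forall>x\<in>S. \<forall>y\<in>S. br x y \<in> S"
  shows "lie_algebra S br"
proof -
  obtain B where "finite B" "span B = S"
    using finitely_spanned_subspace[OF lie_algebra_finitely_spanned[OF lie] S]
    unfolding finitely_spanned_def by blast
  then have "\<exists>B. finite B \<and> B \<subseteq> S \<and> span B = S"
    using span_superset by blast
  with lie S closed show ?thesis
    unfolding lie_algebra_def by (intro conjI) blast+
qed

lemma subspace_eigenspace:
  assumes V: "subspace V"
    and lin: "\<forall>x\<in>V. \<forall>y\<in>V. \<forall>a b::real. E (a *\<^sub>R x + b *\<^sub>R y) = a *\<^sub>R E x + b *\<^sub>R E y"
  shows "subspace {x \<in> V. E x = c *\<^sub>R x}"
  unfolding subspace_def
proof (intro conjI ballI allI)
  show "0 \<in> {x \<in> V. E x = c *\<^sub>R x}"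
    using lin[rule_format, OF subspace_0[OF V] subspace_0[OF V], of 0 0] subspace_0[OF V] by simp
next
  fix x y assume "x \<in> {x \<in> V. E x = c *\<^sub>R x}" "y \<in> {x \<in> V. E x = c *\<^sub>R x}"
  then show "x + y \<in> {x \<in> V. E x = c *\<^sub>R x}"
    using lin[rule_format, of x y 1 1] subspace_add[OF V] by (simp add: scaleR_add_right)
next
  fix k x assume "x \<in> {x \<in> V. E x = c *\<^sub>R x}"
  then show "k *\<^sub>R x \<in> {x \<in> V. E x = c *\<^sub>R x}"
    using lin[rule_format, of x x k 0] subspace_scale[OF V] by (simp add: mult.commute)
qed

lemma
  assumes "subspace V" "product_structure V br E"
  shows subspace_plus_eigenspace: "subspace (plus_eigenspace V E)"
    and subspace_minus_eigenspace: "subspace (minus_eigenspace V E)"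
proof -
  have "subspace {x \<in> V. E x = c *\<^sub>R x}" for c
    using assms subspace_eigenspace unfolding product_structure_def by blast
  from this[of 1] this[of "-1"] show "subspace (plus_eigenspace V E)" "subspace (minus_eigenspace V E)"
    by (simp_all add: plus_eigenspace_def minus_eigenspace_def)
qed

lemma lie_algebra_plus_eigenspace:
  assumes lie: "lie_algebra V br" and E: "product_structure V br E"
  shows "lie_algebra (plus_eigenspace V E) br"
proof (rule lie_algebra_subalgebra[OF lie subspace_plus_eigenspace[OF lie_algebra_subspace[OF lie] E]])
  show "plus_eigenspace V E \<subseteq> V"
    by (auto simp: plus_eigenspace_def)
  show "\<forall>x\<in>plus_eigenspace V E. \<forall>y\<in>plus_eigenspace V E. br x y \<in> plus_eigenspace V E"
  proof (intro ballI)
    fix x y assume "x \<in> plus_eigenspace V E" "y \<in> plus_eigenspace V E"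
    then have xy: "x \<in> V" "y \<in> V" "E x = x" "E y = y"
      by (auto simp: plus_eigenspace_def)
    then have "br x y \<in> V"
      using lie unfolding lie_algebra_def by blast
    moreover have "E (br x y) = br x y + br x y - E (br x y)"
      using E xy unfolding product_structure_def by metis
    then have "E (br x y) = br x y"
      by (metis real_vector_add_self_eq_iff eq_diff_eq)
    ultimately show "br x y \<in> plus_eigenspace V E"
      by (simp add: plus_eigenspace_def)
  qed
qed

lemma lie_algebra_minus_eigenspace:
  assumes lie: "lie_algebra V br" and E: "product_structure V br E"
  shows "lie_algebra (minus_eigenspace V E) br"
proof (rule lie_algebra_subalgebra[OF lie subspace_minus_eigenspace[OF lie_algebra_subspace[OF lie] E]])
  show "minus_eigenspace V E \<subseteq> V"
    by (auto simp: minus_eigenspace_def)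
  show "\<forall>x\<in>minus_eigenspace V E. \<forall>y\<in>minus_eigenspace V E. br x y \<in> minus_eigenspace V E"
  proof (intro ballI)
    fix x y assume "x \<in> minus_eigenspace V E" "y \<in> minus_eigenspace V E"
    then have xy: "x \<in> V" "y \<in> V" "E x = - x" "E y = - y"
      by (auto simp: minus_eigenspace_def)
    then have "br x y \<in> V"
      using lie unfolding lie_algebra_def by blast
    have "- x \<in> V"
      using xy subspace_neg lie_algebra_subspace[OF lie] by blast
    have "E (br x y) = br (- x) y + br x (- y) - E (br (- x) (- y))"
      using E xy unfolding product_structure_def by metis
    also have "\<dots> = - br x y - br x y - E (br x y)"
      using lie_algebra_bracket_uminus[OF lie] xy \<open>- x \<in> V\<close> by simp
    finally have "E (br x y) = - br x y"
      by (metis real_vector_add_self_eq_iff diff_conv_add_uminus eq_diff_eq)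
    with \<open>br x y \<in> V\<close> show "br x y \<in> minus_eigenspace V E"
      by (simp add: minus_eigenspace_def)
  qed
qed

lemma plus_eigenspace_nontrivial:
  assumes V: "subspace V" and E: "product_structure V br E"
  shows "plus_eigenspace V E \<noteq> {0}"
proof -
  obtain v where v: "v \<in> V" "E v \<noteq> - v"
    using E unfolding product_structure_def by blast
  have "E v \<in> V" "E (E v) = v"
    using E v(1) unfolding product_structure_def by blast+
  moreover have "E (1 *\<^sub>R v + 1 *\<^sub>R E v) = 1 *\<^sub>R E v + 1 *\<^sub>R E (E v)"
    using E v(1) \<open>E v \<in> V\<close> unfolding product_structure_def by blast
  ultimately have "v + E v \<in> plus_eigenspace V E"
    using subspace_add[OF V v(1) \<open>E v \<in> V\<close>] by (simp add: plus_eigenspace_def add.commute)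
  moreover have "v + E v \<noteq> 0"
    using v(2) by (metis neg_eq_iff_add_eq_0)
  ultimately show ?thesis
    by blast
qed

section \<open>Paracomplex structures on a product by generators\<close>

lemma generator_form_uminus:
  assumes "generator_forms V br \<omega>" "i < b1 V br" "x \<in> V"
  shows "\<omega> i (- x) = - \<omega> i x"
proof -
  have "\<omega> i ((-1) *\<^sub>R x + 0 *\<^sub>R x) = (-1) * \<omega> i x + 0 * \<omega> i x"
    using assms unfolding generator_forms_def by blast
  then show ?thesis
    by simp
qed

lemma mem_gen_prod_carrier:
  "(x, y, z) \<in> gen_prod_carrier V1 br1 V2 br2 \<longleftrightarrow>
     x \<in> V1 \<and> y \<in> V2 \<and> (\<forall>i j. (b1 V1 br1 \<le> i \<or> b1 V2 br2 \<le> j) \<longrightarrow> z (i, j) = 0)"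
  by (simp add: gen_prod_carrier_def)

definition gen_prod_involution :: "nat \<Rightarrow> 'a::real_vector \<times> 'b::real_vector \<times> (nat \<times> nat \<Rightarrow> real)
     \<Rightarrow> 'a \<times> 'b \<times> (nat \<times> nat \<Rightarrow> real)" where
  "gen_prod_involution k = (\<lambda>(x, y, z). (x, - y, \<lambda>p. if fst p < k then z p else - z p))"

lemma gen_prod_involution_apply [simp]:
  "gen_prod_involution k (x, y, z) = (x, - y, \<lambda>p. if fst p < k then z p else - z p)"
  by (simp add: gen_prod_involution_def)

lemma gen_prod_involution_integrable:
  fixes V1 :: "'a::real_vector set" and V2 :: "'b::real_vector set"
  assumes lie: "lie_algebra V2 br2" and forms: "generator_forms V2 br2 \<omega>2"
    and w: "w \<in> gen_prod_carrier V1 br1 V2 br2" and w': "w' \<in> gen_prod_carrier V1 br1 V2 br2"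
  shows "gen_prod_involution k (gen_prod_bracket V1 br1 \<omega>1 V2 br2 \<omega>2 w w') =
           gen_prod_bracket V1 br1 \<omega>1 V2 br2 \<omega>2 (gen_prod_involution k w) w'
         + gen_prod_bracket V1 br1 \<omega>1 V2 br2 \<omega>2 w (gen_prod_involution k w')
         - gen_prod_involution k (gen_prod_bracket V1 br1 \<omega>1 V2 br2 \<omega>2
             (gen_prod_involution k w) (gen_prod_involution k w'))"
proof -
  obtain x y z x' y' z' where ww': "w = (x, y, z)" "w' = (x', y', z')"
    by (cases w, cases w') auto
  have y: "y \<in> V2" "y' \<in> V2" "- y \<in> V2"
    using w w' subspace_neg[OF lie_algebra_subspace[OF lie]] by (auto simp: ww' mem_gen_prod_carrier)
  have br2: "br2 (- y) y' = - br2 y y'" "br2 y (- y') = - br2 y y'" "br2 (- y) (- y') = br2 y y'"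
    using lie_algebra_bracket_uminus[OF lie] y by simp_all
  have \<omega>2: "\<omega>2 j (- y) = - \<omega>2 j y" "\<omega>2 j (- y') = - \<omega>2 j y'" if "j < b1 V2 br2" for j
    using generator_form_uminus[OF forms that] y by simp_all
  show ?thesis
    unfolding ww' gen_prod_bracket_def
    by (auto simp: br2 \<omega>2 fun_eq_iff algebra_simps)
qed

lemma plus_eigenspace_gen_prod_involution:
  fixes V1 :: "'a::real_vector set" and V2 :: "'b::real_vector set"
  assumes "0 \<in> V2" "k \<le> b1 V1 br1"
  shows "plus_eigenspace (gen_prod_carrier V1 br1 V2 br2) (gen_prod_involution k) =
           V1 \<times> {0} \<times> supported_on ({..<k} \<times> {..<b1 V2 br2})"
proof (rule set_eqI)
  fix w :: "'a \<times> 'b \<times> (nat \<times> nat \<Rightarrow> real)"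
  obtain x y z where w: "w = (x, y, z)"
    by (cases w) auto
  have "w \<in> plus_eigenspace (gen_prod_carrier V1 br1 V2 br2) (gen_prod_involution k) \<longleftrightarrow>
      x \<in> V1 \<and> y \<in> V2 \<and> - y = y \<and> (\<forall>i j. (b1 V1 br1 \<le> i \<or> b1 V2 br2 \<le> j) \<longrightarrow> z (i, j) = 0) \<and>
      (\<forall>p. \<not> fst p < k \<longrightarrow> - z p = z p)"
    by (auto simp: w plus_eigenspace_def mem_gen_prod_carrier fun_eq_iff)
  also have "\<dots> \<longleftrightarrow> w \<in> V1 \<times> {0} \<times> supported_on ({..<k} \<times> {..<b1 V2 br2})"
    using assms by (auto simp: w supported_on_def real_vector_neg_eq_self_iff)
  finally show "w \<in> plus_eigenspace (gen_prod_carrier V1 br1 V2 br2) (gen_prod_involution k) \<longleftrightarrow>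
      w \<in> V1 \<times> {0} \<times> supported_on ({..<k} \<times> {..<b1 V2 br2})" .
qed

lemma minus_eigenspace_gen_prod_involution:
  fixes V1 :: "'a::real_vector set" and V2 :: "'b::real_vector set"
  assumes "0 \<in> V1"
  shows "minus_eigenspace (gen_prod_carrier V1 br1 V2 br2) (gen_prod_involution k) =
           {0} \<times> V2 \<times> supported_on ({k..<b1 V1 br1} \<times> {..<b1 V2 br2})"
proof (rule set_eqI)
  fix w :: "'a \<times> 'b \<times> (nat \<times> nat \<Rightarrow> real)"
  obtain x y z where w: "w = (x, y, z)"
    by (cases w) auto
  have "w \<in> minus_eigenspace (gen_prod_carrier V1 br1 V2 br2) (gen_prod_involution k) \<longleftrightarrow>
      x \<in> V1 \<and> y \<in> V2 \<and> - x = x \<and> (\<forall>i j. (b1 V1 br1 \<le> i \<or> b1 V2 br2 \<le> j) \<longrightarrow> z (i, j) = 0) \<and>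
      (\<forall>p. fst p < k \<longrightarrow> - z p = z p)"
    by (auto simp: w minus_eigenspace_def mem_gen_prod_carrier fun_eq_iff)
  also have "\<dots> \<longleftrightarrow> w \<in> {0} \<times> V2 \<times> supported_on ({k..<b1 V1 br1} \<times> {..<b1 V2 br2})"
    using assms by (auto simp: w supported_on_def real_vector_neg_eq_self_iff)
  finally show "w \<in> minus_eigenspace (gen_prod_carrier V1 br1 V2 br2) (gen_prod_involution k) \<longleftrightarrow>
      w \<in> {0} \<times> V2 \<times> supported_on ({k..<b1 V1 br1} \<times> {..<b1 V2 br2})" .
qed

lemma product_structure_gen_prod_involution:
  fixes V1 :: "'a::real_vector set" and V2 :: "'b::real_vector set"
  assumes lie1: "lie_algebra V1 br1" and lie2: "lie_algebra V2 br2"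
    and forms: "generator_forms V2 br2 \<omega>2"
    and nontrivial: "V1 \<noteq> {0}" "V2 \<noteq> {0}"
  shows "product_structure (gen_prod_carrier V1 br1 V2 br2)
           (gen_prod_bracket V1 br1 \<omega>1 V2 br2 \<omega>2) (gen_prod_involution k)"
  unfolding product_structure_def
proof (intro conjI ballI allI)
  fix w assume "w \<in> gen_prod_carrier V1 br1 V2 br2"
  then show "gen_prod_involution k w \<in> gen_prod_carrier V1 br1 V2 br2"
    using subspace_neg[OF lie_algebra_subspace[OF lie2]]
    by (cases w) (auto simp: mem_gen_prod_carrier)
next
  fix w w' :: "'a \<times> 'b \<times> (nat \<times> nat \<Rightarrow> real)" and a b :: real
  show "gen_prod_involution k (a *\<^sub>R w + b *\<^sub>R w') =
      a *\<^sub>R gen_prod_involution k w + b *\<^sub>R gen_prod_involution k w'"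
    by (cases w, cases w') (simp add: fun_eq_iff scaleR_fun_def algebra_simps)
next
  fix w :: "'a \<times> 'b \<times> (nat \<times> nat \<Rightarrow> real)"
  show "gen_prod_involution k (gen_prod_involution k w) = w"
    by (cases w) (simp add: fun_eq_iff)
next
  have "0 \<in> V1" "0 \<in> V2"
    using lie1 lie2 lie_algebra_subspace subspace_0 by blast+
  then obtain y where y: "y \<in> V2" "y \<noteq> 0"
    using nontrivial(2) by auto
  have "(0, y, 0) \<in> gen_prod_carrier V1 br1 V2 br2"
    using y(1) \<open>0 \<in> V1\<close> unfolding mem_gen_prod_carrier by simp
  moreover have "gen_prod_involution k (0, y, 0) \<noteq> (0, y, 0)"
    using y(2) by (simp add: real_vector_neg_eq_self_iff)
  ultimately show "\<not> (\<forall>w\<in>gen_prod_carrier V1 br1 V2 br2. gen_prod_involution k w = w)"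
    by blast
next
  have "0 \<in> V1" "0 \<in> V2"
    using lie1 lie2 lie_algebra_subspace subspace_0 by blast+
  then obtain x where x: "x \<in> V1" "x \<noteq> 0"
    using nontrivial(1) by auto
  have "(x, 0, 0) \<in> gen_prod_carrier V1 br1 V2 br2"
    using x(1) \<open>0 \<in> V2\<close> unfolding mem_gen_prod_carrier by simp
  moreover have "gen_prod_involution k (x, 0, 0) \<noteq> - (x, 0, 0)"
    using x(2) real_vector_neg_eq_self_iff[of x] by auto
  ultimately show "\<not> (\<forall>w\<in>gen_prod_carrier V1 br1 V2 br2. gen_prod_involution k w = - w)"
    by blast
qed (rule gen_prod_involution_integrable[OF lie2 forms])

theorem gen_prod_paracomplex:
  fixes V1 :: "'a::real_vector set" and V2 :: "'b::real_vector set"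
  assumes lie1: "lie_algebra V1 br1" and lie2: "lie_algebra V2 br2"
    and forms: "generator_forms V2 br2 \<omega>2"
    and dim_eq: "dim V1 = dim V2" and nontrivial: "V1 \<noteq> {0}"
    and even: "even (b1 V1 br1)"
  shows "\<exists>F. paracomplex_structure (gen_prod_carrier V1 br1 V2 br2)
               (gen_prod_bracket V1 br1 \<omega>1 V2 br2 \<omega>2) F"
proof -
  define k where "k = b1 V1 br1 div 2"
  define P where "P = {..<k} \<times> {..<b1 V2 br2}"
  define Q where "Q = {k..<b1 V1 br1} \<times> {..<b1 V2 br2}"
  have fs: "finitely_spanned V1" "finitely_spanned V2"
    using lie1 lie2 by (simp_all add: lie_algebra_finitely_spanned)
  have "V2 \<noteq> {0}"
    using nontrivial dim_eq fs by (simp add: dim_eq_0_iff_finitely_spanned[symmetric])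
  then have ps: "product_structure (gen_prod_carrier V1 br1 V2 br2)
      (gen_prod_bracket V1 br1 \<omega>1 V2 br2 \<omega>2) (gen_prod_involution k)"
    using product_structure_gen_prod_involution[OF lie1 lie2 forms nontrivial] by blast
  have "finite P" "finite Q" "card P = card Q"
    using even by (auto simp: P_def Q_def k_def card_cartesian_product elim!: evenE)
  have "0 \<in> V1" "0 \<in> V2"
    using lie1 lie2 lie_algebra_subspace subspace_0 by blast+
  have "dim (plus_eigenspace (gen_prod_carrier V1 br1 V2 br2) (gen_prod_involution k)) =
      dim (V1 \<times> {0::'b} \<times> supported_on P)"
    using \<open>0 \<in> V2\<close> by (simp add: plus_eigenspace_gen_prod_involution P_def k_def)
  also have "\<dots> = dim V1 + card P"
    using fs(1) \<open>finite P\<close>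
    by (simp add: dim_Times_finitely_spanned finitely_spanned_Times finitely_spanned_zero
        finitely_spanned_supported_on dim_supported_on)
  also have "\<dots> = dim V2 + card Q"
    using dim_eq \<open>card P = card Q\<close> by simp
  also have "\<dots> = dim ({0::'a} \<times> V2 \<times> supported_on Q)"
    using fs(2) \<open>finite Q\<close>
    by (simp add: dim_Times_finitely_spanned finitely_spanned_Times finitely_spanned_zero
        finitely_spanned_supported_on dim_supported_on)
  also have "\<dots> = dim (minus_eigenspace (gen_prod_carrier V1 br1 V2 br2) (gen_prod_involution k))"
    using \<open>0 \<in> V1\<close> by (simp add: minus_eigenspace_gen_prod_involution Q_def)
  finally show ?thesis
    using ps unfolding paracomplex_structure_def by blast
qed

theorem corollary2:
  fixes V :: "'a::real_vector set" and br :: "'a \<Rightarrow> 'a \<Rightarrow> 'a"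
    and E :: "'a \<Rightarrow> 'a" and X :: "nat \<Rightarrow> 'a" and n m :: nat
  assumes solv: "solvable_lie V br"
    and dimV: "dim V = 2 * n"
    and basis: "X ` {1..2*n} \<subseteq> V" "inj_on X {1..2*n}" "independent (X ` {1..2*n})"
               "span (X ` {1..2*n}) = V"
    and m_le: "4 * m \<le> 2 * n"
    and b1g: "b1 V br = 4 * m"
    and para: "paracomplex_structure V br E"
    and h1: "\<forall>i\<in>{1..4*m}. X i \<notin> brackets br V V"
    and h2: "\<forall>i\<in>{1..2*m}. X i \<in> plus_eigenspace V E"
            "\<forall>i\<in>{2*m+1..4*m}. X i \<in> minus_eigenspace V E"
    and h3: "b1 (plus_eigenspace V E) br = 2 * m" "b1 (minus_eigenspace V E) br = 2 * m"
  shows "\<forall>\<omega>1 \<omega>2. generator_forms (plus_eigenspace V E) br \<omega>1 \<and>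
                  generator_forms (minus_eigenspace V E) br \<omega>2 \<longrightarrow>
           (\<exists>F. paracomplex_structure
                  (gen_prod_carrier (plus_eigenspace V E) br (minus_eigenspace V E) br)
                  (gen_prod_bracket (plus_eigenspace V E) br \<omega>1 (minus_eigenspace V E) br \<omega>2) F)"
proof (intro allI impI)
  fix \<omega>1 \<omega>2
  assume "generator_forms (plus_eigenspace V E) br \<omega>1 \<and>
      generator_forms (minus_eigenspace V E) br \<omega>2"
  then have forms: "generator_forms (minus_eigenspace V E) br \<omega>2"
    by blast
  have lie: "lie_algebra V br"
    using solv by (simp add: solvable_lie_def)
  have E: "product_structure V br E"
    and dim_eq: "dim (plus_eigenspace V E) = dim (minus_eigenspace V E)"
    using para by (simp_all add: paracomplex_structure_def)
  show "\<exists>F. paracomplex_structure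
      (gen_prod_carrier (plus_eigenspace V E) br (minus_eigenspace V E) br)
      (gen_prod_bracket (plus_eigenspace V E) br \<omega>1 (minus_eigenspace V E) br \<omega>2) F"
  proof (rule gen_prod_paracomplex)
    show "lie_algebra (plus_eigenspace V E) br" "lie_algebra (minus_eigenspace V E) br"
      using lie E by (simp_all add: lie_algebra_plus_eigenspace lie_algebra_minus_eigenspace)
    show "plus_eigenspace V E \<noteq> {0}"
      using plus_eigenspace_nontrivial[OF lie_algebra_subspace[OF lie] E] .
    show "even (b1 (plus_eigenspace V E) br)"
      using h3(1) by simp
  qed (use forms dim_eq in simp_all)
qed

end
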